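(* In the setting of the context, let $\nu$ be a probability measure on $M$ with $$\int f_k\,d\nu=0,\qquad \int f_k^2\,d\nu=1,\qquad \int \Gamma(f_k)\,d\nu\le \lambda_k(\mu).$$ Then for all $g\in H^1(\nu)\cap E_{k-1}^{\perp}$, $$\left|\int\bigl(\lambda_k(\nu)\,f_k\, g-\Gamma(f_k,g)\bigr)\,d\nu\right|\le\Bigl[\lambda_k(\mu)-\lambda_k(\nu)+\sum_{i=1}^{k-1}\bigl(\lambda_k(\nu)-\lambda_i(\nu)\bigr)\,d(f_k,Sp_i(\nu)^\perp)^2\Bigr]^{1/2}\sqrt{\int\Gamma(g)\,d\nu}.$$
   Context: $L$ is a Markov generator on a state space $M$, reversible with respect to a probability measure $\mu$, with carré du champ operator $\Gamma(f,g)=\frac12\bigl(L(fg)-fLg-gLf\bigr)$, $\Gamma(f)=\Gamma(f,f)$. Let $0<\lambda_1(\mu)<\lambda_2(\mu)<\cdots$ be the eigenvalues of $-L$ counted without multiplicity, fix $k\ge1$, and let $f_k$ satisfy $-Lf_k=\lambda_k(\mu)f_k$, $\int f_k\,d\mu=0$, $\int f_k^2\,d\mu=1$. For a probability measure $\nu$ on $M$ define $H^1(\nu)=\{f\in L^2(\nu):\int f\,d\nu=0,\ \int\Gamma(f)\,d\nu<\infty\}$. Set $E_0=\{0\}$ and recursively, for $m\ge0$, with $\perp$ denoting orthogonal complement in $L^2(\nu)$: $$\lambda_{m+1}(\nu)=\inf_{f\in H^1(\nu)\cap E_m^\perp,\ f\neq 0}\frac{\int\Gamma(f)\,d\nu}{\int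 f^2\,d\nu},$$ $$Sp_{m+1}(\nu)=\Bigl\{f\in H^1(\nu)\cap E_m^\perp:\ \forall g\in H^1(\nu)\cap E_m^\perp,\ \int fg\,d\nu=\tfrac{1}{\lambda_{m+1}(\nu)}\int\Gamma(f,g)\,d\nu\Bigr\},$$ and $E_{m+1}=Sp_1(\nu)\oplus\cdots\oplus Sp_{m+1}(\nu)$. Write the $L^2(\nu)$-orthogonal projection of $f_k$ onto $E_{k-1}$ as $p_k^1+\dots+p_k^{k-1}$ with $p_k^i\in Sp_i(\nu)$, and define $d(f_k,Sp_i(\nu)^\perp)^2:=\int (p_k^i)^2\,d\nu$. *)

theory Defs
  imports "HOL-Probability.Probability"
begin

definition Gam :: "(('a \<Rightarrow> real) \<Rightarrow> ('a \<Rightarrow> real)) \<Rightarrow> ('a \<Rightarrow> real) \<Rightarrow> ('a \<Rightarrow> real) \<Rightarrow> 'a \<Rightarrow> real" where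
  "Gam L f g = (\<lambda>x. (L (\<lambda>y. f y * g y) x - f x * L g x - g x * L f x) / 2)"

definition markov_generator ::
  "('a \<Rightarrow> real) set \<Rightarrow> (('a \<Rightarrow> real) \<Rightarrow> ('a \<Rightarrow> real)) \<Rightarrow> 'a measure \<Rightarrow> bool" where
  "markov_generator D L \<mu> \<longleftrightarrow>
     prob_space \<mu> \<and>
     D \<subseteq> borel_measurable \<mu> \<and>
     (\<forall>c. (\<lambda>x. c) \<in> D) \<and>
     (\<forall>f\<in>D. \<forall>g\<in>D. (\<lambda>x. f x + g x) \<in> D \<and> (\<lambda>x. f x * g x) \<in> D) \<and>
     (\<forall>f\<in>D. \<forall>c. (\<lambda>x. c * f x) \<in> D) \<and>
     (\<forall>f\<in>D. L f \<in> D) \<and>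
     (\<forall>f\<in>D. \<forall>g\<in>D. \<forall>x\<in>space \<mu>. L (\<lambda>y. f y + g y) x = L f x + L g x) \<and>
     (\<forall>f\<in>D. \<forall>c. \<forall>x\<in>space \<mu>. L (\<lambda>y. c * f y) x = c * L f x) \<and>
     (\<forall>x\<in>space \<mu>. L (\<lambda>y. 1) x = 0) \<and>
     (\<forall>f\<in>D. \<forall>x\<in>space \<mu>. Gam L f f x \<ge> 0) \<and>
     (\<forall>f\<in>D. \<forall>g\<in>D. (\<integral>x. f x * L g x \<partial>\<mu>) = (\<integral>x. g x * L f x \<partial>\<mu>))"

definition is_eigenvalue ::
  "('a \<Rightarrow> real) set \<Rightarrow> (('a \<Rightarrow> real) \<Rightarrow> ('a \<Rightarrow> real)) \<Rightarrow> 'a measure \<Rightarrow> real \<Rightarrow> bool" where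
  "is_eigenvalue D L \<mu> l \<longleftrightarrow>
     (\<exists>f\<in>D. integrable \<mu> (\<lambda>x. (f x)\<^sup>2) \<and> (\<integral>x. (f x)\<^sup>2 \<partial>\<mu>) \<noteq> 0 \<and>
            (AE x in \<mu>. - L f x = l * f x))"

definition H1 ::
  "('a \<Rightarrow> real) set \<Rightarrow> (('a \<Rightarrow> real) \<Rightarrow> ('a \<Rightarrow> real)) \<Rightarrow> 'a measure \<Rightarrow> ('a \<Rightarrow> real) set" where
  "H1 D L \<nu> = {f \<in> D. f \<in> borel_measurable \<nu> \<and> integrable \<nu> (\<lambda>x. (f x)\<^sup>2) \<and>
                     (\<integral>x. f x \<partial>\<nu>) = 0 \<and> integrable \<nu> (Gam L f f)}"

definition orth :: "'a measure \<Rightarrow> ('a \<Rightarrow> real) set \<Rightarrow> ('a \<Rightarrow> real) set" where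
  "orth \<nu> E = {f. \<forall>e\<in>E. (\<integral>x. f x * e x \<partial>\<nu>) = 0}"

definition lam_next ::
  "('a \<Rightarrow> real) set \<Rightarrow> (('a \<Rightarrow> real) \<Rightarrow> ('a \<Rightarrow> real)) \<Rightarrow> 'a measure \<Rightarrow> ('a \<Rightarrow> real) set \<Rightarrow> real" where
  "lam_next D L \<nu> E = Inf {(\<integral>x. Gam L f f x \<partial>\<nu>) / (\<integral>x. (f x)\<^sup>2 \<partial>\<nu>) | f.
        f \<in> H1 D L \<nu> \<inter> orth \<nu> E \<and> (\<integral>x. (f x)\<^sup>2 \<partial>\<nu>) \<noteq> 0}"

definition Sp_next ::
  "('a \<Rightarrow> real) set \<Rightarrow> (('a \<Rightarrow> real) \<Rightarrow> ('a \<Rightarrow> real)) \<Rightarrow> 'a measure \<Rightarrow> ('a \<Rightarrow> real) set \<Rightarrow> ('a \<Rightarrow> real) set" where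
  "Sp_next D L \<nu> E = {f \<in> H1 D L \<nu> \<inter> orth \<nu> E. \<forall>g \<in> H1 D L \<nu> \<inter> orth \<nu> E.
        (\<integral>x. f x * g x \<partial>\<nu>) = (1 / lam_next D L \<nu> E) * (\<integral>x. Gam L f g x \<partial>\<nu>)}"

primrec Espace ::
  "('a \<Rightarrow> real) set \<Rightarrow> (('a \<Rightarrow> real) \<Rightarrow> ('a \<Rightarrow> real)) \<Rightarrow> 'a measure \<Rightarrow> nat \<Rightarrow> ('a \<Rightarrow> real) set" where
  "Espace D L \<nu> 0 = {(\<lambda>x. 0)}"
| "Espace D L \<nu> (Suc m) = {(\<lambda>x. e x + s x) | e s.
       e \<in> Espace D L \<nu> m \<and> s \<in> Sp_next D L \<nu> (Espace D L \<nu> m)}"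

text \<open>lambda_i(nu) and Sp_i(nu) for i >= 1.\<close>
definition lam_nu ::
  "('a \<Rightarrow> real) set \<Rightarrow> (('a \<Rightarrow> real) \<Rightarrow> ('a \<Rightarrow> real)) \<Rightarrow> 'a measure \<Rightarrow> nat \<Rightarrow> real" where
  "lam_nu D L \<nu> i = lam_next D L \<nu> (Espace D L \<nu> (i - 1))"

definition Sp ::
  "('a \<Rightarrow> real) set \<Rightarrow> (('a \<Rightarrow> real) \<Rightarrow> ('a \<Rightarrow> real)) \<Rightarrow> 'a measure \<Rightarrow> nat \<Rightarrow> ('a \<Rightarrow> real) set" where
  "Sp D L \<nu> i = Sp_next D L \<nu> (Espace D L \<nu> (i - 1))"

end

theory Submission
  imports Defs
begin

text \<open>Split \<open>f\<^sub>k = h + \<Sum>\<^sub>i p\<^sub>i\<close> with \<open>h \<bottom> E\<^sub>k\<^sub>-\<^sub>1\<close>. By the variational definition of \<open>\<lambda>\<^sub>k(\<nu>)\<close>, the form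
  \<open>Q(u,v) = \<integral>\<Gamma>(u,v) d\<nu> - \<lambda>\<^sub>k(\<nu>) \<integral>uv d\<nu>\<close> is nonnegative on \<open>H\<^sup>1(\<nu>) \<inter> E\<^sub>k\<^sub>-\<^sub>1\<^sup>\<bottom>\<close>, hence satisfies the
  Cauchy-Schwarz inequality there. Every \<open>p\<^sub>i\<close> is orthogonal to such a \<open>g\<close> both in \<open>L\<^sup>2(\<nu>)\<close> and, by the
  eigen-relation defining \<open>Sp\<^sub>i(\<nu>)\<close>, in energy; so the left-hand side equals
  \<open>|Q(h,g)| \<le> Q(h,h)\<^sup>1\<^sup>/\<^sup>2 Q(g,g)\<^sup>1\<^sup>/\<^sup>2\<close>, and \<open>Q(g,g) \<le> \<integral>\<Gamma>(g) d\<nu>\<close> as \<open>\<lambda>\<^sub>k(\<nu>) \<ge> 0\<close>. The \<open>p\<^sub>i\<close> are also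
  mutually orthogonal in both senses, so Pythagoras gives
  \<open>Q(h,h) = \<integral>\<Gamma>(f\<^sub>k) d\<nu> - \<Sum>\<^sub>i \<lambda>\<^sub>i(\<nu>) \<parallel>p\<^sub>i\<parallel>\<^sup>2 - \<lambda>\<^sub>k(\<nu>) (1 - \<Sum>\<^sub>i \<parallel>p\<^sub>i\<parallel>\<^sup>2)\<close>, which the assumption
  \<open>\<integral>\<Gamma>(f\<^sub>k) d\<nu> \<le> \<lambda>\<^sub>k(\<mu>)\<close> bounds by the bracket.\<close>

lemma square_integrable_mult:
  fixes f g :: "'a \<Rightarrow> real"
  assumes [measurable]: "f \<in> borel_measurable M" "g \<in> borel_measurable M"
    and "integrable M (\<lambda>x. (f x)\<^sup>2)" "integrable M (\<lambda>x. (g x)\<^sup>2)"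
  shows "integrable M (\<lambda>x. f x * g x)"
proof (rule Bochner_Integration.integrable_bound[where f = "\<lambda>x. (f x)\<^sup>2 + (g x)\<^sup>2"])
  show "integrable M (\<lambda>x. (f x)\<^sup>2 + (g x)\<^sup>2)"
    using assms by simp
  have "\<bar>a * b\<bar> \<le> a\<^sup>2 + b\<^sup>2" for a b :: real
    using sum_squares_bound[of "\<bar>a\<bar>" "\<bar>b\<bar>"] abs_ge_zero[of "a * b"]
    unfolding abs_mult power2_abs by linarith
  then show "AE x in M. norm (f x * g x) \<le> norm ((f x)\<^sup>2 + (g x)\<^sup>2)"
    by simp
qed simp

lemma quadratic_nonneg_imp_discriminant_le:
  fixes a b c :: real
  assumes nonneg: "\<And>t. 0 \<le> a + 2 * t * b + t\<^sup>2 * c" and "0 \<le> c"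
  shows "b\<^sup>2 \<le> a * c"
proof (cases "c = 0")
  case True
  have "b = 0"
  proof (rule ccontr)
    assume "b \<noteq> 0"
    have "0 \<le> a + 2 * (- (a + 1) / (2 * b)) * b + (- (a + 1) / (2 * b))\<^sup>2 * c"
      by (rule nonneg)
    also have "\<dots> = -1"
      using True \<open>b \<noteq> 0\<close> by (simp add: field_simps)
    finally show False by simp
  qed
  then show ?thesis using True by simp
next
  case False
  then have "0 < c" using \<open>0 \<le> c\<close> by simp
  have "0 \<le> a + 2 * (- b / c) * b + (- b / c)\<^sup>2 * c"
    by (rule nonneg)
  also have "\<dots> = a - b\<^sup>2 / c"
    using \<open>0 < c\<close> by (simp add: field_simps power2_eq_square)
  finally show ?thesis
    using \<open>0 < c\<close> by (simp add: field_simps)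
qed

subsection \<open>Carre du champ calculus\<close>

text \<open>The algebraic part of \<^const>\<open>markov_generator\<close>, over the measure \<open>\<nu>\<close>.\<close>
locale carre_du_champ = finite_measure \<nu>
  for \<nu> :: "'a measure" +
  fixes D :: "('a \<Rightarrow> real) set" and L :: "('a \<Rightarrow> real) \<Rightarrow> ('a \<Rightarrow> real)"
  assumes D_measurable: "\<And>f. f \<in> D \<Longrightarrow> f \<in> borel_measurable \<nu>"
    and D_const: "\<And>c. (\<lambda>x. c) \<in> D"
    and D_add: "\<And>f g. f \<in> D \<Longrightarrow> g \<in> D \<Longrightarrow> (\<lambda>x. f x + g x) \<in> D"
    and D_mult: "\<And>f g. f \<in> D \<Longrightarrow> g \<in> D \<Longrightarrow> (\<lambda>x. f x * g x) \<in> D"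
    and D_scale: "\<And>f c. f \<in> D \<Longrightarrow> (\<lambda>x. c * f x) \<in> D"
    and L_D: "\<And>f. f \<in> D \<Longrightarrow> L f \<in> D"
    and L_add: "\<And>f g x. f \<in> D \<Longrightarrow> g \<in> D \<Longrightarrow> x \<in> space \<nu> \<Longrightarrow>
      L (\<lambda>y. f y + g y) x = L f x + L g x"
    and L_scale: "\<And>f c x. f \<in> D \<Longrightarrow> x \<in> space \<nu> \<Longrightarrow> L (\<lambda>y. c * f y) x = c * L f x"
    and L_const_one: "\<And>x. x \<in> space \<nu> \<Longrightarrow> L (\<lambda>y. 1) x = 0"
    and Gam_nonneg: "\<And>f x. f \<in> D \<Longrightarrow> x \<in> space \<nu> \<Longrightarrow> 0 \<le> Gam L f f x"
begin

abbreviation H :: "('a \<Rightarrow> real) set" where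
  "H \<equiv> H1 D L \<nu>"

abbreviation ip :: "('a \<Rightarrow> real) \<Rightarrow> ('a \<Rightarrow> real) \<Rightarrow> real" where
  "ip u v \<equiv> \<integral>x. u x * v x \<partial>\<nu>"

abbreviation En :: "('a \<Rightarrow> real) \<Rightarrow> ('a \<Rightarrow> real) \<Rightarrow> real" where
  "En u v \<equiv> \<integral>x. Gam L u v x \<partial>\<nu>"

lemma L_add_scaled:
  assumes "u \<in> D" "v \<in> D" "x \<in> space \<nu>"
  shows "L (\<lambda>y. u y + t * v y) x = L u x + t * L v x"
  using assms by (simp add: L_add L_scale D_scale)

lemma Gam_commute: "Gam L u v = Gam L v u"
  unfolding Gam_def by (simp add: algebra_simps)

lemma Gam_zero_left:
  assumes "x \<in> space \<nu>"
  shows "Gam L (\<lambda>y. 0) w x = 0"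
  using assms L_scale[of "\<lambda>y. 1" x 0] L_const_one D_const unfolding Gam_def by simp

lemma Gam_add_scaled_left:
  assumes "u \<in> D" "v \<in> D" "w \<in> D" "x \<in> space \<nu>"
  shows "Gam L (\<lambda>y. u y + t * v y) w x = Gam L u w x + t * Gam L v w x"
proof -
  have "(\<lambda>y. (u y + t * v y) * w y) = (\<lambda>y. u y * w y + t * (v y * w y))"
    by (simp add: algebra_simps)
  then have "L (\<lambda>y. (u y + t * v y) * w y) x = L (\<lambda>y. u y * w y) x + t * L (\<lambda>y. v y * w y) x"
    using assms by (simp add: L_add_scaled D_mult)
  then show ?thesis
    using assms unfolding Gam_def by (simp add: L_add_scaled field_simps)
qed

lemma Gam_square_add_scaled:
  assumes "u \<in> D" "v \<in> D" "x \<in> space \<nu>"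
  shows "Gam L (\<lambda>y. u y + t * v y) (\<lambda>y. u y + t * v y) x
    = Gam L u u x + 2 * t * Gam L u v x + t\<^sup>2 * Gam L v v x"
proof -
  have uv: "(\<lambda>y. u y + t * v y) \<in> D"
    using assms by (simp add: D_add D_scale)
  have "Gam L (\<lambda>y. u y + t * v y) (\<lambda>y. u y + t * v y) x
      = Gam L (\<lambda>y. u y + t * v y) u x + t * Gam L (\<lambda>y. u y + t * v y) v x"
    using Gam_add_scaled_left[OF assms(1,2) uv assms(3)] by (simp add: Gam_commute)
  also have "\<dots> = Gam L u u x + 2 * t * Gam L u v x + t\<^sup>2 * Gam L v v x"
    using assms by (simp add: Gam_add_scaled_left Gam_commute[of v u] algebra_simps power2_eq_square)
  finally show ?thesis .
qed

lemma Gam_abs_le: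
  assumes "u \<in> D" "v \<in> D" "x \<in> space \<nu>"
  shows "\<bar>Gam L u v x\<bar> \<le> (Gam L u u x + Gam L v v x) / 2"
proof -
  have "0 \<le> Gam L u u x + 2 * t * Gam L u v x + t\<^sup>2 * Gam L v v x" for t
  proof -
    have "(\<lambda>y. u y + t * v y) \<in> D"
      using assms by (simp add: D_add D_scale)
    then show ?thesis
      using Gam_nonneg assms(3) Gam_square_add_scaled[OF assms, of t] by metis
  qed
  from this[of 1] this[of "-1"] show ?thesis
    by (simp add: abs_le_iff)
qed

lemma Gam_measurable:
  assumes "u \<in> D" "v \<in> D"
  shows "Gam L u v \<in> borel_measurable \<nu>"
proof -
  have [measurable]: "u \<in> borel_measurable \<nu>" "v \<in> borel_measurable \<nu>"
    "L u \<in> borel_measurable \<nu>" "L v \<in> borel_measurable \<nu>"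
    "L (\<lambda>y. u y * v y) \<in> borel_measurable \<nu>"
    using assms by (simp_all add: D_measurable L_D D_mult)
  show ?thesis
    unfolding Gam_def by measurable
qed

lemma H1_memD:
  assumes "u \<in> H"
  shows "u \<in> D" and "integrable \<nu> (\<lambda>x. (u x)\<^sup>2)" and "(\<integral>x. u x \<partial>\<nu>) = 0"
    and "integrable \<nu> (Gam L u u)"
  using assms unfolding H1_def by auto

lemma H1_integrable: "u \<in> H \<Longrightarrow> integrable \<nu> u"
  using square_integrable_imp_integrable D_measurable H1_memD(1,2) by metis

lemma H1_integrable_mult: "u \<in> H \<Longrightarrow> v \<in> H \<Longrightarrow> integrable \<nu> (\<lambda>x. u x * v x)"
  using square_integrable_mult D_measurable H1_memD(1,2) by metis

lemma H1_integrable_Gam: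
  assumes "u \<in> H" "v \<in> H"
  shows "integrable \<nu> (Gam L u v)"
proof (rule Bochner_Integration.integrable_bound[where f = "\<lambda>x. (Gam L u u x + Gam L v v x) / 2"])
  show "integrable \<nu> (\<lambda>x. (Gam L u u x + Gam L v v x) / 2)"
    using assms H1_memD(4) by simp
  show "Gam L u v \<in> borel_measurable \<nu>"
    using assms H1_memD(1) by (simp add: Gam_measurable)
  show "AE x in \<nu>. norm (Gam L u v x) \<le> norm ((Gam L u u x + Gam L v v x) / 2)"
  proof (rule AE_I2)
    fix x assume "x \<in> space \<nu>"
    then have "\<bar>Gam L u v x\<bar> \<le> (Gam L u u x + Gam L v v x) / 2"
      using assms Gam_abs_le[OF H1_memD(1) H1_memD(1)] by blast
    then show "norm (Gam L u v x) \<le> norm ((Gam L u u x + Gam L v v x) / 2)"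
      by (simp add: abs_le_iff)
  qed
qed

lemma H1_zero: "(\<lambda>x. 0) \<in> H"
proof -
  have "integrable \<nu> (Gam L (\<lambda>x. 0) (\<lambda>x. 0))"
    using Bochner_Integration.integrable_cong[OF refl, of \<nu> "Gam L (\<lambda>x. 0) (\<lambda>x. 0)" "\<lambda>x. 0"]
    by (simp add: Gam_zero_left)
  then show ?thesis
    unfolding H1_def using D_const D_measurable by auto
qed

lemma H1_add_scaled:
  assumes u: "u \<in> H" and v: "v \<in> H"
  shows "(\<lambda>x. u x + t * v x) \<in> H"
proof -
  have uv: "(\<lambda>x. u x + t * v x) \<in> D"
    using u v H1_memD(1) by (simp add: D_add D_scale)
  have "integrable \<nu> (\<lambda>x. (u x + t * v x)\<^sup>2)"
  proof -
    have "integrable \<nu> (\<lambda>x. (u x)\<^sup>2 + 2 * t * (u x * v x) + t\<^sup>2 * (v x)\<^sup>2)"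
      using u v H1_memD(2) H1_integrable_mult by simp
    moreover have "(a + t * b)\<^sup>2 = a\<^sup>2 + 2 * t * (a * b) + t\<^sup>2 * b\<^sup>2" for a b :: real
      by (simp add: power2_eq_square algebra_simps)
    ultimately show ?thesis
      by simp
  qed
  moreover have "(\<integral>x. u x + t * v x \<partial>\<nu>) = 0"
    using u v H1_integrable H1_memD(3) by simp
  moreover have "integrable \<nu> (Gam L (\<lambda>x. u x + t * v x) (\<lambda>x. u x + t * v x))"
  proof (subst Bochner_Integration.integrable_cong[OF refl])
    show "integrable \<nu> (\<lambda>x. Gam L u u x + 2 * t * Gam L u v x + t\<^sup>2 * Gam L v v x)"
      using u v H1_memD(4) H1_integrable_Gam by simp
  qed (use u v H1_memD(1) Gam_square_add_scaled in simp)
  ultimately show ?thesis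
    unfolding H1_def using uv D_measurable by blast
qed

lemma H1_add: "u \<in> H \<Longrightarrow> v \<in> H \<Longrightarrow> (\<lambda>x. u x + v x) \<in> H"
  using H1_add_scaled[of u v 1] by simp

lemma H1_sum: "(\<And>i. i \<in> I \<Longrightarrow> q i \<in> H) \<Longrightarrow> (\<lambda>x. \<Sum>i\<in>I. q i x) \<in> H"
proof (induction I rule: infinite_finite_induct)
  case (insert a F)
  then show ?case
    using H1_add[of "q a" "\<lambda>x. \<Sum>i\<in>F. q i x"] by simp
qed (simp_all add: H1_zero)

subsection \<open>Symmetric bilinear forms on \<open>H\<^sup>1(\<nu>)\<close>\<close>

definition sym_bilinear :: "(('a \<Rightarrow> real) \<Rightarrow> ('a \<Rightarrow> real) \<Rightarrow> real) \<Rightarrow> bool" where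
  "sym_bilinear B \<longleftrightarrow> (\<forall>u v. B u v = B v u) \<and>
     (\<forall>u\<in>H. \<forall>v\<in>H. \<forall>w\<in>H. \<forall>t. B (\<lambda>x. u x + t * v x) w = B u w + t * B v w)"

lemma sym_bilinear_commute: "sym_bilinear B \<Longrightarrow> B u v = B v u"
  unfolding sym_bilinear_def by blast

lemma sym_bilinear_add_scaled_left:
  "sym_bilinear B \<Longrightarrow> u \<in> H \<Longrightarrow> v \<in> H \<Longrightarrow> w \<in> H \<Longrightarrow>
    B (\<lambda>x. u x + t * v x) w = B u w + t * B v w"
  unfolding sym_bilinear_def by blast

lemma sym_bilinear_add_left:
  "sym_bilinear B \<Longrightarrow> u \<in> H \<Longrightarrow> v \<in> H \<Longrightarrow> w \<in> H \<Longrightarrow>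
    B (\<lambda>x. u x + v x) w = B u w + B v w"
  using sym_bilinear_add_scaled_left[of B u v w 1] by simp

lemma sym_bilinear_zero_left: "sym_bilinear B \<Longrightarrow> w \<in> H \<Longrightarrow> B (\<lambda>x. 0) w = 0"
  using sym_bilinear_add_left[OF _ H1_zero H1_zero] by simp

lemma sym_bilinear_sum_left:
  assumes "sym_bilinear B" "\<And>i. i \<in> I \<Longrightarrow> q i \<in> H" "w \<in> H"
  shows "B (\<lambda>x. \<Sum>i\<in>I. q i x) w = (\<Sum>i\<in>I. B (q i) w)"
  using assms(2)
proof (induction I rule: infinite_finite_induct)
  case (insert a F)
  then show ?case
    using sym_bilinear_add_left[OF assms(1) _ H1_sum assms(3), of "q a" F q] by simp
qed (simp_all add: sym_bilinear_zero_left assms)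

lemma sym_bilinear_square_add_scaled:
  assumes B: "sym_bilinear B" and "u \<in> H" "v \<in> H"
  shows "B (\<lambda>x. u x + t * v x) (\<lambda>x. u x + t * v x) = B u u + 2 * t * B u v + t\<^sup>2 * B v v"
proof -
  have uv: "(\<lambda>x. u x + t * v x) \<in> H"
    using assms by (simp add: H1_add_scaled)
  have "B (\<lambda>x. u x + t * v x) (\<lambda>x. u x + t * v x)
      = B u (\<lambda>x. u x + t * v x) + t * B v (\<lambda>x. u x + t * v x)"
    using sym_bilinear_add_scaled_left[OF B assms(2,3) uv] .
  also have "\<dots> = B u u + 2 * t * B u v + t\<^sup>2 * B v v"
    using assms sym_bilinear_add_scaled_left[OF B] sym_bilinear_commute[OF B]
    by (simp add: algebra_simps power2_eq_square)
  finally show ?thesis .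
qed

lemma sym_bilinear_Cauchy_Schwarz:
  assumes B: "sym_bilinear B" and "u \<in> H" "v \<in> H"
    and nonneg: "\<And>t. 0 \<le> B (\<lambda>x. u x + t * v x) (\<lambda>x. u x + t * v x)" and "0 \<le> B v v"
  shows "(B u v)\<^sup>2 \<le> B u u * B v v"
  using quadratic_nonneg_imp_discriminant_le nonneg \<open>0 \<le> B v v\<close>
  unfolding sym_bilinear_square_add_scaled[OF assms(1-3)] by blast

lemma sym_bilinear_Pythagoras:
  assumes B: "sym_bilinear B" and "finite I" and "u \<in> H" and q: "\<And>i. i \<in> I \<Longrightarrow> q i \<in> H"
    and u_orth: "\<And>i. i \<in> I \<Longrightarrow> B u (q i) = 0"
    and q_orth: "\<And>i j. i \<in> I \<Longrightarrow> j \<in> I \<Longrightarrow> i \<noteq> j \<Longrightarrow> B (q i) (q j) = 0"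
  shows "B (\<lambda>x. u x + (\<Sum>i\<in>I. q i x)) (\<lambda>x. u x + (\<Sum>i\<in>I. q i x)) = B u u + (\<Sum>i\<in>I. B (q i) (q i))"
  using assms(2-)
proof (induction I arbitrary: u rule: finite_induct)
  case empty
  then show ?case by simp
next
  case (insert a F)
  define u' where "u' = (\<lambda>x. u x + q a x)"
  have u': "u' \<in> H"
    unfolding u'_def using insert.prems by (simp add: H1_add)
  have "B u' (q i) = 0" if "i \<in> F" for i
  proof -
    have "i \<noteq> a"
      using that insert.hyps by auto
    then show ?thesis
      unfolding u'_def using that insert.prems sym_bilinear_add_left[OF B] by simp
  qed
  then have "B (\<lambda>x. u' x + (\<Sum>i\<in>F. q i x)) (\<lambda>x. u' x + (\<Sum>i\<in>F. q i x))
      = B u' u' + (\<Sum>i\<in>F. B (q i) (q i))"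
    using insert u' by (intro insert.IH) auto
  moreover have "B u' u' = B u u + B (q a) (q a)"
    using sym_bilinear_square_add_scaled[OF B insert.prems(1), of "q a" 1] insert.prems
    by (simp add: u'_def)
  moreover have "(\<lambda>x. u' x + (\<Sum>i\<in>F. q i x)) = (\<lambda>x. u x + (\<Sum>i\<in>insert a F. q i x))"
    using insert.hyps by (simp add: u'_def add.assoc)
  ultimately show ?case
    using insert.hyps by simp
qed

lemma sym_bilinear_diff:
  assumes "sym_bilinear A" "sym_bilinear B"
  shows "sym_bilinear (\<lambda>u v. A u v - c * B u v)"
proof (unfold sym_bilinear_def, intro conjI allI ballI)
  fix u v
  show "A u v - c * B u v = A v u - c * B v u"
    using sym_bilinear_commute[OF assms(1), of u v] sym_bilinear_commute[OF assms(2), of u v] by simp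
next
  fix u v w t assume "u \<in> H" "v \<in> H" "w \<in> H"
  then show "A (\<lambda>x. u x + t * v x) w - c * B (\<lambda>x. u x + t * v x) w
      = A u w - c * B u w + t * (A v w - c * B v w)"
    using assms by (simp add: sym_bilinear_add_scaled_left algebra_simps)
qed

lemma sym_bilinear_ip: "sym_bilinear ip"
proof (unfold sym_bilinear_def, intro conjI allI ballI)
  fix u v :: "'a \<Rightarrow> real"
  show "ip u v = ip v u"
    by (simp add: mult.commute)
next
  fix u v w t assume "u \<in> H" "v \<in> H" "w \<in> H"
  then show "ip (\<lambda>x. u x + t * v x) w = ip u w + t * ip v w"
    by (simp add: distrib_right mult.assoc H1_integrable_mult)
qed

lemma sym_bilinear_En: "sym_bilinear En"
proof -
  have "En (\<lambda>x. u x + t * v x) w = En u w + t * En v w" if "u \<in> H" "v \<in> H" "w \<in> H" for u v w t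
  proof -
    have "En (\<lambda>x. u x + t * v x) w = (\<integral>x. Gam L u w x + t * Gam L v w x \<partial>\<nu>)"
      using that by (intro Bochner_Integration.integral_cong refl) (simp add: Gam_add_scaled_left H1_memD(1))
    then show ?thesis
      using that by (simp add: H1_integrable_Gam)
  qed
  then show ?thesis
    unfolding sym_bilinear_def by (simp add: Gam_commute)
qed

lemma H1_orth_add_scaled:
  assumes "E \<subseteq> H" "u \<in> H \<inter> orth \<nu> E" "v \<in> H \<inter> orth \<nu> E"
  shows "(\<lambda>x. u x + t * v x) \<in> H \<inter> orth \<nu> E"
proof -
  have "ip (\<lambda>x. u x + t * v x) e = 0" if "e \<in> E" for e
    using assms that sym_bilinear_add_scaled_left[OF sym_bilinear_ip, of u v e t]
    unfolding orth_def by auto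
  then show ?thesis
    using assms H1_add_scaled unfolding orth_def by auto
qed

subsection \<open>Rayleigh quotients and the spaces \<open>E\<^sub>m\<close>, \<open>Sp\<^sub>m\<close>\<close>

lemma ip_self_nonneg: "0 \<le> ip u u"
  by (simp add: integral_nonneg_AE)

lemma En_self_nonneg: "u \<in> D \<Longrightarrow> 0 \<le> En u u"
  by (simp add: integral_nonneg_AE Gam_nonneg)

lemma ip_eq_0_if_null:
  assumes "u \<in> H" "w \<in> H" "ip u u = 0"
  shows "ip u w = 0"
proof -
  have "(ip w u)\<^sup>2 \<le> ip w w * ip u u"
    using assms ip_self_nonneg by (intro sym_bilinear_Cauchy_Schwarz[OF sym_bilinear_ip])
  then show ?thesis
    using assms(3) sym_bilinear_commute[OF sym_bilinear_ip, of u w] by simp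
qed

lemma lam_next_le_Rayleigh_quotient:
  assumes u: "u \<in> H \<inter> orth \<nu> E" and "ip u u \<noteq> 0"
  shows "lam_next D L \<nu> E \<le> En u u / ip u u" and "0 \<le> lam_next D L \<nu> E"
proof -
  have sq: "(\<integral>x. (f x)\<^sup>2 \<partial>\<nu>) = ip f f" for f :: "'a \<Rightarrow> real"
    by (simp add: power2_eq_square)
  let ?S = "{En f f / (\<integral>x. (f x)\<^sup>2 \<partial>\<nu>) | f. f \<in> H \<inter> orth \<nu> E \<and> (\<integral>x. (f x)\<^sup>2 \<partial>\<nu>) \<noteq> 0}"
  have mem: "En u u / ip u u \<in> ?S"
    using assms unfolding sq by blast
  have nonneg: "0 \<le> y" if "y \<in> ?S" for y
  proof -
    from that obtain f where "y = En f f / ip f f" "f \<in> H"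
      unfolding sq by blast
    then show ?thesis
      using En_self_nonneg[OF H1_memD(1)] ip_self_nonneg by simp
  qed
  show "lam_next D L \<nu> E \<le> En u u / ip u u"
    unfolding lam_next_def using mem nonneg by (intro cInf_lower bdd_belowI) auto
  show "0 \<le> lam_next D L \<nu> E"
    unfolding lam_next_def using mem nonneg by (intro cInf_greatest) auto
qed

lemma lam_next_mult_le_En:
  assumes "u \<in> H \<inter> orth \<nu> E"
  shows "lam_next D L \<nu> E * ip u u \<le> En u u"
proof (cases "ip u u = 0")
  case True
  then show ?thesis
    using assms En_self_nonneg[OF H1_memD(1)] by simp
next
  case False
  then have "0 < ip u u"
    using ip_self_nonneg[of u] by linarith
  then show ?thesis
    using lam_next_le_Rayleigh_quotient(1)[OF assms False] by (simp add: pos_le_divide_eq)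
qed

lemma zero_mem_Sp_next: "E \<subseteq> H \<Longrightarrow> (\<lambda>x. 0) \<in> Sp_next D L \<nu> E"
  unfolding Sp_next_def orth_def
  using H1_zero sym_bilinear_zero_left[OF sym_bilinear_En] by auto

lemma Sp_next_subset: "Sp_next D L \<nu> E \<subseteq> H \<inter> orth \<nu> E"
  unfolding Sp_next_def by blast

lemma Espace_subset_H1: "Espace D L \<nu> m \<subseteq> H"
proof (induction m)
  case 0
  then show ?case using H1_zero by simp
next
  case (Suc m)
  then show ?case
    using Sp_next_subset by (auto intro!: H1_add)
qed

lemma Espace_Suc_memI:
  "e \<in> Espace D L \<nu> m \<Longrightarrow> s \<in> Sp_next D L \<nu> (Espace D L \<nu> m) \<Longrightarrow>
    (\<lambda>x. e x + s x) \<in> Espace D L \<nu> (Suc m)"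
  by auto

lemma zero_mem_Espace: "(\<lambda>x. 0) \<in> Espace D L \<nu> m"
proof (induction m)
  case (Suc m)
  then show ?case
    using Espace_Suc_memI[OF Suc zero_mem_Sp_next[OF Espace_subset_H1]] by simp
qed simp

lemma Sp_next_subset_Espace_Suc: "Sp_next D L \<nu> (Espace D L \<nu> m) \<subseteq> Espace D L \<nu> (Suc m)"
  using Espace_Suc_memI[OF zero_mem_Espace] by fastforce

lemma Espace_mono: "m \<le> n \<Longrightarrow> Espace D L \<nu> m \<subseteq> Espace D L \<nu> n"
proof (induction n rule: dec_induct)
  case (step n)
  have "Espace D L \<nu> n \<subseteq> Espace D L \<nu> (Suc n)"
    using Espace_Suc_memI[OF _ zero_mem_Sp_next[OF Espace_subset_H1]] by fastforce
  with step.IH show ?case by blast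
qed simp

lemma orth_antimono: "A \<subseteq> B \<Longrightarrow> orth \<nu> B \<subseteq> orth \<nu> A"
  unfolding orth_def by blast

lemma Sp_subset_Espace: "1 \<le> i \<Longrightarrow> i \<le> m \<Longrightarrow> Sp D L \<nu> i \<subseteq> Espace D L \<nu> m"
  using Sp_next_subset_Espace_Suc[of "i - 1"] Espace_mono[of i m] unfolding Sp_def by auto

lemma Sp_subset_orth: "1 \<le> i \<Longrightarrow> i \<le> j \<Longrightarrow> Sp D L \<nu> j \<subseteq> H \<inter> orth \<nu> (Espace D L \<nu> (i - 1))"
  using Sp_next_subset[of "Espace D L \<nu> (j - 1)"] orth_antimono[OF Espace_mono[of "i - 1" "j - 1"]]
  unfolding Sp_def by force

lemma Sp_orthogonal:
  assumes "1 \<le> i" "i < j" "s \<in> Sp D L \<nu> i" "t \<in> Sp D L \<nu> j"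
  shows "ip s t = 0"
proof -
  have "s \<in> Espace D L \<nu> (j - 1)" and "t \<in> orth \<nu> (Espace D L \<nu> (j - 1))"
    using assms Sp_subset_Espace[of i "j - 1"] Sp_subset_orth[of j j] by force+
  then show ?thesis
    unfolding orth_def by (simp add: mult.commute)
qed

lemma Sp_next_energy:
  assumes "s \<in> Sp_next D L \<nu> E" "g \<in> H \<inter> orth \<nu> E" "lam_next D L \<nu> E \<noteq> 0"
  shows "En s g = lam_next D L \<nu> E * ip s g"
  using assms unfolding Sp_next_def by auto

lemma Sp_next_null:
  assumes "s \<in> Sp_next D L \<nu> E" "lam_next D L \<nu> E = 0"
  shows "ip s s = 0"
  using assms unfolding Sp_next_def by auto

end

subsection \<open>Splitting \<open>f\<^sub>k\<close> along \<open>Sp\<^sub>1(\<nu>), \<dots>, Sp\<^sub>k\<^sub>-\<^sub>1(\<nu>)\<close>\<close>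

locale Sp_projection = carre_du_champ \<nu> D L
  for \<nu> :: "'a measure" and D L +
  fixes k :: nat and f :: "'a \<Rightarrow> real" and p :: "nat \<Rightarrow> 'a \<Rightarrow> real" and \<Lambda> :: real
  assumes f_H1: "f \<in> H"
    and f_normalized: "(\<integral>x. (f x)\<^sup>2 \<partial>\<nu>) = 1"
    and f_energy: "En f f \<le> \<Lambda>"
    and p_Sp: "\<And>i. 1 \<le> i \<Longrightarrow> i < k \<Longrightarrow> p i \<in> Sp D L \<nu> i"
    and p_projection: "(\<lambda>x. f x - (\<Sum>i\<in>{1..<k}. p i x)) \<in> orth \<nu> (Espace D L \<nu> (k - 1))"
begin

abbreviation lam :: "nat \<Rightarrow> real" where
  "lam i \<equiv> lam_nu D L \<nu> i"

abbreviation V :: "('a \<Rightarrow> real) set" where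
  "V \<equiv> H \<inter> orth \<nu> (Espace D L \<nu> (k - 1))"

text \<open>With \<open>1 / 0 = 0\<close>, the relation defining \<open>Sp\<^sub>i(\<nu>)\<close> for \<open>lam i = 0\<close> only says that the
  component is null in \<open>L\<^sup>2(\<nu>)\<close>; its energy is unconstrained, so it is replaced by \<open>0\<close>.\<close>
definition q :: "nat \<Rightarrow> 'a \<Rightarrow> real" where
  "q i = (if lam i = 0 then (\<lambda>x. 0) else p i)"

definition h :: "'a \<Rightarrow> real" where
  "h = (\<lambda>x. f x - (\<Sum>i\<in>{1..<k}. q i x))"

lemma p_H1: "1 \<le> i \<Longrightarrow> i < k \<Longrightarrow> p i \<in> H"
  using p_Sp Sp_subset_orth[of i i] by blast

lemma q_Sp: "1 \<le> i \<Longrightarrow> i < k \<Longrightarrow> q i \<in> Sp D L \<nu> i"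
  using p_Sp zero_mem_Sp_next[OF Espace_subset_H1] unfolding q_def Sp_def by auto

lemma q_H1: "1 \<le> i \<Longrightarrow> i < k \<Longrightarrow> q i \<in> H"
  using q_Sp Sp_subset_orth[of i i] by blast

lemma p_null_if_lam_zero: "1 \<le> i \<Longrightarrow> i < k \<Longrightarrow> lam i = 0 \<Longrightarrow> ip (p i) (p i) = 0"
  using Sp_next_null p_Sp unfolding Sp_def lam_nu_def by blast

lemma ip_q_q: "1 \<le> i \<Longrightarrow> i < k \<Longrightarrow> ip (q i) (q i) = (\<integral>x. (p i x)\<^sup>2 \<partial>\<nu>)"
  using p_null_if_lam_zero unfolding q_def by (simp add: power2_eq_square)

lemma ip_q_left: "1 \<le> i \<Longrightarrow> i < k \<Longrightarrow> w \<in> H \<Longrightarrow> ip (q i) w = ip (p i) w"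
  using ip_eq_0_if_null[OF p_H1 _ p_null_if_lam_zero] unfolding q_def by auto

lemma En_q_left:
  assumes "1 \<le> i" "i < k" "g \<in> H \<inter> orth \<nu> (Espace D L \<nu> (i - 1))"
  shows "En (q i) g = lam i * ip (q i) g"
proof (cases "lam i = 0")
  case True
  then show ?thesis
    using assms sym_bilinear_zero_left[OF sym_bilinear_En] unfolding q_def by simp
next
  case False
  then show ?thesis
    using assms p_Sp Sp_next_energy unfolding q_def Sp_def lam_nu_def by simp
qed

lemma q_orthogonal:
  assumes "i \<in> {1..<k}" "j \<in> {1..<k}" "i \<noteq> j"
  shows "ip (q i) (q j) = 0" and "En (q i) (q j) = 0"
proof -
  have *: "ip (q i) (q j) = 0 \<and> En (q i) (q j) = 0" if "i \<in> {1..<k}" "j \<in> {1..<k}" "i < j" for i j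
  proof -
    have "ip (q i) (q j) = 0"
      using that q_Sp by (intro Sp_orthogonal[of i j]) auto
    moreover have "q j \<in> H \<inter> orth \<nu> (Espace D L \<nu> (i - 1))"
      using that q_Sp Sp_subset_orth[of i j] by auto
    ultimately show ?thesis
      using that En_q_left by simp
  qed
  show "ip (q i) (q j) = 0" "En (q i) (q j) = 0"
    using *[of i j] *[of j i] assms sym_bilinear_commute[OF sym_bilinear_ip, of "q i"]
      sym_bilinear_commute[OF sym_bilinear_En, of "q i"] by (cases "i < j"; force)+
qed

lemma q_orth_V:
  assumes "i \<in> {1..<k}" "g \<in> V"
  shows "ip (q i) g = 0" and "En (q i) g = 0"
proof -
  have "q i \<in> Espace D L \<nu> (k - 1)"
    using assms q_Sp Sp_subset_Espace[of i "k - 1"] by force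
  then have "ip g (q i) = 0"
    using assms(2) unfolding orth_def by blast
  then show ip: "ip (q i) g = 0"
    using sym_bilinear_commute[OF sym_bilinear_ip] by metis
  have "orth \<nu> (Espace D L \<nu> (k - 1)) \<subseteq> orth \<nu> (Espace D L \<nu> (i - 1))"
    using assms(1) by (intro orth_antimono Espace_mono) auto
  then have "g \<in> H \<inter> orth \<nu> (Espace D L \<nu> (i - 1))"
    using assms(2) by blast
  then show "En (q i) g = 0"
    using assms En_q_left ip by simp
qed

lemma h_mem_V: "h \<in> V"
proof -
  let ?Q = "\<lambda>x. \<Sum>i\<in>{1..<k}. q i x" and ?P = "\<lambda>x. \<Sum>i\<in>{1..<k}. p i x"
  have Q: "?Q \<in> H" and P: "?P \<in> H"
    using q_H1 p_H1 by (auto intro: H1_sum)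
  have h_eq: "h = (\<lambda>x. f x + (-1) * ?Q x)"
    by (simp add: h_def)
  have "ip h e = 0" if e: "e \<in> Espace D L \<nu> (k - 1)" for e
  proof -
    have eH: "e \<in> H"
      using e Espace_subset_H1 by blast
    have "ip h e = ip f e + (-1) * ip ?Q e"
      unfolding h_eq by (rule sym_bilinear_add_scaled_left[OF sym_bilinear_ip f_H1 Q eH])
    also have "ip ?Q e = (\<Sum>i\<in>{1..<k}. ip (q i) e)"
      using q_H1 by (intro sym_bilinear_sum_left[OF sym_bilinear_ip _ eH]) simp
    also have "\<dots> = (\<Sum>i\<in>{1..<k}. ip (p i) e)"
      using eH ip_q_left by simp
    also have "\<dots> = ip ?P e"
      using p_H1 by (intro sym_bilinear_sum_left[OF sym_bilinear_ip _ eH, symmetric]) simp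
    also have "ip f e + (-1) * ip ?P e = ip (\<lambda>x. f x + (-1) * ?P x) e"
      by (rule sym_bilinear_add_scaled_left[OF sym_bilinear_ip f_H1 P eH, symmetric])
    also have "\<dots> = 0"
      using p_projection e unfolding orth_def by simp
    finally show ?thesis .
  qed
  moreover have "h \<in> H"
    unfolding h_eq using f_H1 Q by (rule H1_add_scaled)
  ultimately show ?thesis
    unfolding orth_def by blast
qed

lemma f_eq_h_plus_q: "f = (\<lambda>x. h x + (\<Sum>i\<in>{1..<k}. q i x))"
  by (simp add: h_def)

lemma form_f_eq_form_h:
  assumes B: "sym_bilinear B" and "g \<in> H" and "\<And>i. i \<in> {1..<k} \<Longrightarrow> B (q i) g = 0"
  shows "B f g = B h g"
proof -
  have "B f g = B h g + B (\<lambda>x. \<Sum>i\<in>{1..<k}. q i x) g"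
    using assms h_mem_V q_H1 by (subst f_eq_h_plus_q) (intro sym_bilinear_add_left H1_sum; auto)
  also have "B (\<lambda>x. \<Sum>i\<in>{1..<k}. q i x) g = (\<Sum>i\<in>{1..<k}. B (q i) g)"
    using q_H1 by (intro sym_bilinear_sum_left[OF B _ \<open>g \<in> H\<close>]) simp
  also have "\<dots> = 0"
    using assms(3) by simp
  finally show ?thesis
    by simp
qed

lemma f_Pythagoras:
  assumes B: "sym_bilinear B" and "\<And>i. i \<in> {1..<k} \<Longrightarrow> B h (q i) = 0"
    and "\<And>i j. i \<in> {1..<k} \<Longrightarrow> j \<in> {1..<k} \<Longrightarrow> i \<noteq> j \<Longrightarrow> B (q i) (q j) = 0"
  shows "B f f = B h h + (\<Sum>i\<in>{1..<k}. B (q i) (q i))"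
  using h_mem_V q_H1 assms(2,3)
  by (subst (1 2) f_eq_h_plus_q) (intro sym_bilinear_Pythagoras[OF B]; auto)

lemma ip_f_f: "ip f f = ip h h + (\<Sum>i\<in>{1..<k}. \<integral>x. (p i x)\<^sup>2 \<partial>\<nu>)"
proof -
  have "ip h (q i) = 0" if "i \<in> {1..<k}" for i
    using q_orth_V(1)[OF that h_mem_V] sym_bilinear_commute[OF sym_bilinear_ip] by metis
  then show ?thesis
    using f_Pythagoras[OF sym_bilinear_ip] q_orthogonal(1) ip_q_q by simp
qed

lemma En_f_f: "En f f = En h h + (\<Sum>i\<in>{1..<k}. lam i * (\<integral>x. (p i x)\<^sup>2 \<partial>\<nu>))"
proof -
  have "En h (q i) = 0" if "i \<in> {1..<k}" for i
    using q_orth_V(2)[OF that h_mem_V] sym_bilinear_commute[OF sym_bilinear_En] by metis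
  moreover have "En (q i) (q i) = lam i * (\<integral>x. (p i x)\<^sup>2 \<partial>\<nu>)" if "i \<in> {1..<k}" for i
    using that q_Sp Sp_subset_orth[of i i] En_q_left ip_q_q by force
  ultimately show ?thesis
    using f_Pythagoras[OF sym_bilinear_En] q_orthogonal(2) by simp
qed

lemma h_energy_defect_le:
  "En h h - lam k * ip h h \<le> \<Lambda> - lam k + (\<Sum>i\<in>{1..<k}. (lam k - lam i) * (\<integral>x. (p i x)\<^sup>2 \<partial>\<nu>))"
proof -
  have "ip f f = 1"
    using f_normalized by (simp add: power2_eq_square)
  moreover have "(\<Sum>i\<in>{1..<k}. (lam k - lam i) * (\<integral>x. (p i x)\<^sup>2 \<partial>\<nu>))
      = lam k * (\<Sum>i\<in>{1..<k}. \<integral>x. (p i x)\<^sup>2 \<partial>\<nu>) - (\<Sum>i\<in>{1..<k}. lam i * (\<integral>x. (p i x)\<^sup>2 \<partial>\<nu>))"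
    by (simp add: left_diff_distrib sum_subtractf sum_distrib_left)
  moreover have "ip h h = 1 - (\<Sum>i\<in>{1..<k}. \<integral>x. (p i x)\<^sup>2 \<partial>\<nu>)"
    using calculation(1) ip_f_f by linarith
  then have "lam k * ip h h = lam k - lam k * (\<Sum>i\<in>{1..<k}. \<integral>x. (p i x)\<^sup>2 \<partial>\<nu>)"
    by (simp add: right_diff_distrib)
  ultimately show ?thesis
    using En_f_f f_energy by linarith
qed

theorem eigen_defect_estimate:
  assumes g: "g \<in> V"
  shows "\<bar>\<integral>x. lam k * f x * g x - Gam L f g x \<partial>\<nu>\<bar>
    \<le> sqrt (\<Lambda> - lam k + (\<Sum>i\<in>{1..<k}. (lam k - lam i) * (\<integral>x. (p i x)\<^sup>2 \<partial>\<nu>))) * sqrt (En g g)"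
proof -
  define Q where "Q = (\<lambda>u v. En u v - lam k * ip u v)"
  have Q: "sym_bilinear Q"
    unfolding Q_def by (rule sym_bilinear_diff[OF sym_bilinear_En sym_bilinear_ip])
  have Q_nonneg: "0 \<le> Q u u" if "u \<in> V" for u
    using lam_next_mult_le_En[OF that] unfolding Q_def lam_nu_def by simp
  have gH: "g \<in> H"
    using g by blast
  have "(Q h g)\<^sup>2 \<le> Q h h * Q g g"
    using h_mem_V g Q_nonneg H1_orth_add_scaled[OF Espace_subset_H1]
    by (intro sym_bilinear_Cauchy_Schwarz[OF Q]) auto
  moreover have Qhh: "0 \<le> Q h h" and Qgg: "0 \<le> Q g g"
    using h_mem_V g Q_nonneg by auto
  ultimately have "\<bar>Q h g\<bar> \<le> sqrt (Q h h) * sqrt (Q g g)"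
    by (metis real_sqrt_abs real_sqrt_le_mono real_sqrt_mult)
  also have "\<dots> \<le> sqrt (\<Lambda> - lam k + (\<Sum>i\<in>{1..<k}. (lam k - lam i) * (\<integral>x. (p i x)\<^sup>2 \<partial>\<nu>)))
      * sqrt (En g g)"
  proof -
    have "Q h h \<le> \<Lambda> - lam k + (\<Sum>i\<in>{1..<k}. (lam k - lam i) * (\<integral>x. (p i x)\<^sup>2 \<partial>\<nu>))"
      unfolding Q_def by (rule h_energy_defect_le)
    moreover have "0 \<le> lam k * ip g g"
      using lam_next_le_Rayleigh_quotient(2)[OF g] ip_self_nonneg[of g] unfolding lam_nu_def
      by (cases "ip g g = 0") simp_all
    then have "Q g g \<le> En g g"
      unfolding Q_def by simp
    ultimately show ?thesis
      using Qhh Qgg by (intro mult_mono real_sqrt_le_mono) auto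
  qed
  also have "\<bar>Q h g\<bar> = \<bar>\<integral>x. lam k * f x * g x - Gam L f g x \<partial>\<nu>\<bar>"
  proof -
    have "(\<integral>x. lam k * f x * g x - Gam L f g x \<partial>\<nu>) = lam k * ip f g - En f g"
      using H1_integrable_mult[OF f_H1 gH] H1_integrable_Gam[OF f_H1 gH] by (simp add: mult.assoc)
    also have "\<dots> = lam k * ip h g - En h g"
      using form_f_eq_form_h[OF sym_bilinear_ip gH] form_f_eq_form_h[OF sym_bilinear_En gH] q_orth_V[OF _ g]
      by simp
    finally show ?thesis
      unfolding Q_def by simp
  qed
  finally show ?thesis .
qed

end

theorem mainTheorem3:
  fixes D :: "('a \<Rightarrow> real) set"
    and L :: "('a \<Rightarrow> real) \<Rightarrow> ('a \<Rightarrow> real)"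
    and \<mu> \<nu> :: "'a measure"
    and lam\<mu> :: "nat \<Rightarrow> real"
    and k :: nat
    and fk :: "'a \<Rightarrow> real"
    and p :: "nat \<Rightarrow> 'a \<Rightarrow> real"
  assumes gen: "markov_generator D L \<mu>"
    and spec_mono: "\<And>i j. 1 \<le> i \<Longrightarrow> i < j \<Longrightarrow> lam\<mu> i < lam\<mu> j"
    and spec_pos: "0 < lam\<mu> 1"
    and spec: "{lam\<mu> i | i. 1 \<le> i} = {l. 0 < l \<and> is_eigenvalue D L \<mu> l}"
    and k: "1 \<le> k"
    and fk_D: "fk \<in> D"
    and fk_eig: "AE x in \<mu>. - L fk x = lam\<mu> k * fk x"
    and fk_sq_mu: "integrable \<mu> (\<lambda>x. (fk x)\<^sup>2)"
    and fk_mean_mu: "(\<integral>x. fk x \<partial>\<mu>) = 0"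
    and fk_norm_mu: "(\<integral>x. (fk x)\<^sup>2 \<partial>\<mu>) = 1"
    and nu_prob: "prob_space \<nu>"
    and nu_sets: "sets \<nu> = sets \<mu>"
    and fk_sq_nu: "integrable \<nu> (\<lambda>x. (fk x)\<^sup>2)"
    and fk_mean_nu: "(\<integral>x. fk x \<partial>\<nu>) = 0"
    and fk_norm_nu: "(\<integral>x. (fk x)\<^sup>2 \<partial>\<nu>) = 1"
    and fk_Gam_int: "integrable \<nu> (Gam L fk fk)"
    and fk_energy: "(\<integral>x. Gam L fk fk x \<partial>\<nu>) \<le> lam\<mu> k"
    and p_Sp: "\<And>i. 1 \<le> i \<Longrightarrow> i < k \<Longrightarrow> p i \<in> Sp D L \<nu> i"
    and p_proj: "(\<lambda>x. fk x - (\<Sum>i\<in>{1..<k}. p i x)) \<in> orth \<nu> (Espace D L \<nu> (k - 1))"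
  shows "\<forall>g \<in> H1 D L \<nu> \<inter> orth \<nu> (Espace D L \<nu> (k - 1)).
           \<bar>\<integral>x. lam_nu D L \<nu> k * fk x * g x - Gam L fk g x \<partial>\<nu>\<bar>
             \<le> sqrt (lam\<mu> k - lam_nu D L \<nu> k
                      + (\<Sum>i\<in>{1..<k}. (lam_nu D L \<nu> k - lam_nu D L \<nu> i) * (\<integral>x. (p i x)\<^sup>2 \<partial>\<nu>)))
               * sqrt (\<integral>x. Gam L g g x \<partial>\<nu>)"
proof -
  have space: "space \<nu> = space \<mu>"
    by (rule sets_eq_imp_space_eq[OF nu_sets])
  have meas: "borel_measurable \<nu> = borel_measurable \<mu>"
    by (rule measurable_cong_sets[OF nu_sets refl])
  interpret finite_measure \<nu>
    using nu_prob by (simp add: prob_space_def)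
  interpret carre_du_champ \<nu> D L
    using gen unfolding markov_generator_def by unfold_locales (simp_all add: space meas subset_iff)
  have "fk \<in> H"
    unfolding H1_def using fk_D D_measurable fk_sq_nu fk_mean_nu fk_Gam_int by simp
  interpret Sp_projection \<nu> D L k fk p "lam\<mu> k"
    using \<open>fk \<in> H\<close> fk_norm_nu fk_energy p_Sp p_proj by unfold_locales
  show ?thesis
    using eigen_defect_estimate by blast
qed

end
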